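(* Let $A$ be a locally-complex Cayley--Dickson algebra and let $f(x)=x^n+a_{n-1}x^{n-1}+\dots+a_1x+a_0\in A[x]$ be monic with $n\ge 1$. Then every $r\in\mathrm{sn}(f)$ satisfies $|r|<R_1(f)=\sqrt{1+|a_{n-1}|^2+\dots+|a_1|^2+|a_0|^2}$, $|r|<R_2(f)=1+\max_{0\le k\le n-1}|a_k|$, and $|r|\le R_3(f)=\max\{1,\ |a_{n-1}|+\dots+|a_1|+|a_0|\}$.
   Context: Real Cayley--Dickson algebras: $A_0=\mathbb{R}$ with identity involution, $A_{k+1}=A_k\{\gamma_k\}=A_k\times A_k$ with product $(a,b)(c,d)=(ac+\gamma_k\bar d b,\ da+b\bar c)$ and involution $\overline{(a,b)}=(\bar a,-b)$. A real unital algebra is locally-complex if every non-real element generates a subalgebra isomorphic to $\mathbb{C}$ (for Cayley--Dickson algebras: all $\gamma_k=-1$ up to isomorphism). Trace $\mathrm{tr}(\lambda)=\lambda+\bar\lambda$, norm $\mathrm{n}(\lambda)=\bar\lambda\lambda$, $|\lambda|=\sqrt{\mathrm{n}(\lambda)}$ (the Euclidean norm); $\langle\cdot,\cdot\rangle$ the associated inner product. For $I$ with trace $0$ and norm $1$, $\mathbb{C}_I=\mathbb{R}+\mathbb{R}I\cong\mathbb{C}$ and $\pi_I$ the orthogonal projection onto it. $A[x]=A\otimes_{\mathbb{R}}\mathbb{R}[x]$ with central $x$; for $f(x)=\sum_k a_kx^k$, $f_I(x)=\sum_k\pi_I(a_k)x^k$. If $f_I$ is non-constant, $K_{\mathbb{C}_I}(f_I)$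 is the convex hull in $\mathbb{C}_I$ of the roots of $f_I$ in $\mathbb{C}_I$; otherwise $K_{\mathbb{C}_I}(f_I)=\mathbb{C}_I$. The Gauss--Lucas snail is $\mathrm{sn}(f)=\bigcup_I K_{\mathbb{C}_I}(f_I)$ over all $I$ with $\mathrm{tr}(I)=0$, $\mathrm{n}(I)=1$. *)

theory Defs
  imports "HOL-Analysis.Analysis" "HOL-Library.Function_Algebras"
begin

instantiation "fun" :: (type, real_vector) real_vector
begin
definition scaleR_fun :: "real \<Rightarrow> ('a \<Rightarrow> 'b) \<Rightarrow> 'a \<Rightarrow> 'b"
  where "scaleR_fun r f = (\<lambda>x. r *\<^sub>R f x)"
instance
  by standard (simp_all add: scaleR_fun_def fun_eq_iff scaleR_add_right scaleR_add_left)
end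

text \<open>An element of A_m is represented by its coordinate function nat => real,
  vanishing at indices >= 2^m. A_(k+1) = A_k x A_k: the first half of the
  coordinates (indices < 2^k) is the first component, the second half the second.\<close>

definition cd_lo :: "nat \<Rightarrow> (nat \<Rightarrow> real) \<Rightarrow> (nat \<Rightarrow> real)" where
  "cd_lo k x = (\<lambda>i. if i < 2^k then x i else 0)"

definition cd_hi :: "nat \<Rightarrow> (nat \<Rightarrow> real) \<Rightarrow> (nat \<Rightarrow> real)" where
  "cd_hi k x = (\<lambda>i. if i < 2^k then x (i + 2^k) else 0)"

definition cd_join :: "nat \<Rightarrow> (nat \<Rightarrow> real) \<Rightarrow> (nat \<Rightarrow> real) \<Rightarrow> (nat \<Rightarrow> real)" where
  "cd_join k x y = (\<lambda>i. if i < 2^k then x i else if i < 2 * 2^k then y (i - 2^k) else 0)"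

definition cd_space :: "nat \<Rightarrow> (nat \<Rightarrow> real) set" where
  "cd_space m = {x. \<forall>i. 2^m \<le> i \<longrightarrow> x i = 0}"

definition cd_one :: "nat \<Rightarrow> real" where
  "cd_one = (\<lambda>i. if i = 0 then 1 else 0)"

fun cd_conj :: "nat \<Rightarrow> (nat \<Rightarrow> real) \<Rightarrow> (nat \<Rightarrow> real)" where
  "cd_conj 0 x = (\<lambda>i. if i = 0 then x 0 else 0)"
| "cd_conj (Suc k) x = cd_join k (cd_conj k (cd_lo k x)) (- cd_hi k x)"

text \<open>Product: (a,b)(c,d) = (ac + gamma conj(d) b, da + b conj(c)) with gamma = -1.\<close>
fun cd_mult :: "nat \<Rightarrow> (nat \<Rightarrow> real) \<Rightarrow> (nat \<Rightarrow> real) \<Rightarrow> (nat \<Rightarrow> real)" where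
  "cd_mult 0 x y = (\<lambda>i. if i = 0 then x 0 * y 0 else 0)"
| "cd_mult (Suc k) x y =
     (let a = cd_lo k x; b = cd_hi k x; c = cd_lo k y; d = cd_hi k y
      in cd_join k (cd_mult k a c + (-1::real) *\<^sub>R cd_mult k (cd_conj k d) b)
                   (cd_mult k d a + cd_mult k b (cd_conj k c)))"

text \<open>Trace tr(x) = x + conj x and norm n(x) = conj(x) x (elements of A, real multiples of 1).\<close>
definition cd_tr :: "nat \<Rightarrow> (nat \<Rightarrow> real) \<Rightarrow> (nat \<Rightarrow> real)" where
  "cd_tr m x = x + cd_conj m x"

definition cd_n :: "nat \<Rightarrow> (nat \<Rightarrow> real) \<Rightarrow> (nat \<Rightarrow> real)" where
  "cd_n m x = cd_mult m (cd_conj m x) x"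

text \<open>|x| = sqrt(n(x)), n(x) identified with the real number it is a multiple of 1 by.\<close>
definition cd_abs :: "nat \<Rightarrow> (nat \<Rightarrow> real) \<Rightarrow> real" where
  "cd_abs m x = sqrt (cd_n m x 0)"

definition cd_inner :: "nat \<Rightarrow> (nat \<Rightarrow> real) \<Rightarrow> (nat \<Rightarrow> real) \<Rightarrow> real" where
  "cd_inner m x y = (cd_n m (x + y) 0 - cd_n m x 0 - cd_n m y 0) / 2"

definition cd_pow :: "nat \<Rightarrow> (nat \<Rightarrow> real) \<Rightarrow> nat \<Rightarrow> (nat \<Rightarrow> real)" where
  "cd_pow m r k = ((\<lambda>y. cd_mult m y r) ^^ k) cd_one"

definition cd_unit :: "nat \<Rightarrow> (nat \<Rightarrow> real) \<Rightarrow> bool" where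
  "cd_unit m I \<longleftrightarrow> I \<in> cd_space m \<and> cd_tr m I = 0 \<and> cd_n m I = cd_one"

definition cd_CI :: "(nat \<Rightarrow> real) \<Rightarrow> (nat \<Rightarrow> real) set" where
  "cd_CI I = {u *\<^sub>R cd_one + v *\<^sub>R I | u v. True}"

text \<open>Orthogonal projection onto C_I (1 and I form an orthonormal basis of C_I).\<close>
definition cd_proj :: "nat \<Rightarrow> (nat \<Rightarrow> real) \<Rightarrow> (nat \<Rightarrow> real) \<Rightarrow> (nat \<Rightarrow> real)" where
  "cd_proj m I x = cd_inner m x cd_one *\<^sub>R cd_one + cd_inner m x I *\<^sub>R I"

definition cd_fI :: "nat \<Rightarrow> (nat \<Rightarrow> nat \<Rightarrow> real) \<Rightarrow> nat \<Rightarrow> (nat \<Rightarrow> real) \<Rightarrow> (nat \<Rightarrow> real) \<Rightarrow> (nat \<Rightarrow> real)" where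
  "cd_fI m a n I r = (\<Sum>k\<le>n. cd_mult m (cd_proj m I (a k)) (cd_pow m r k))"

definition cd_K :: "nat \<Rightarrow> (nat \<Rightarrow> nat \<Rightarrow> real) \<Rightarrow> nat \<Rightarrow> (nat \<Rightarrow> real) \<Rightarrow> (nat \<Rightarrow> real) set" where
  "cd_K m a n I =
     (if \<exists>k\<in>{1..n}. cd_proj m I (a k) \<noteq> 0
      then convex hull {r \<in> cd_CI I. cd_fI m a n I r = 0}
      else cd_CI I)"

definition cd_snail :: "nat \<Rightarrow> (nat \<Rightarrow> nat \<Rightarrow> real) \<Rightarrow> nat \<Rightarrow> (nat \<Rightarrow> real) set" where
  "cd_snail m a n = (\<Union>I \<in> {I. cd_unit m I}. cd_K m a n I)"

end

theory Submission
  imports Defs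
begin

(* For a unit I, the map z \<mapsto> Re z + Im z I is an isometric algebra embedding of \<complex> onto
   C_I, so every root s of f_I in C_I comes from a root of the monic complex polynomial
   \<Sum> \<pi>_I(a_k) z^k.  By Bessel's inequality |\<pi>_I(a_k)| \<le> |a_k|, hence t = |s| satisfies
   t^n \<le> \<Sum>_{k<n} |a_k| t^k, from which the three Cauchy-type bounds follow (the first after
   Cauchy-Schwarz, applied to t^2).  Each bound describes a convex set, because |.| is the
   Euclidean norm, so it passes from the roots to their convex hull K(f_I). *)

lemma less_one_plus_of_power_le_geometric_sum:
  fixes s M :: real
  assumes "0 \<le> s" "0 \<le> M" and le: "s ^ n \<le> M * (\<Sum>k<n. s ^ k)"
  shows "s < 1 + M"
proof (cases "s \<le> 1")
  case True
  show ?thesis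
  proof (rule ccontr)
    assume "\<not> s < 1 + M"
    then have "s = 1" "M = 0" using True assms(2) by linarith+
    with le show False by simp
  qed
next
  case False
  then have pos: "0 < s ^ n * (s - 1)" by simp
  have "s ^ n * (s - 1) \<le> M * (\<Sum>k<n. s ^ k) * (s - 1)"
    using le False by (intro mult_right_mono) auto
  also have "\<dots> = M * (s ^ n - 1)"
    by (simp add: power_diff_1_eq mult_ac)
  also have "\<dots> = M * s ^ n - M"
    by (simp add: right_diff_distrib)
  finally have key: "s ^ n * (s - 1) \<le> M * s ^ n - M" .
  show ?thesis
  proof (rule ccontr)
    assume "\<not> s < 1 + M"
    then have "M * s ^ n \<le> (s - 1) * s ^ n"
      using assms(1) by (intro mult_right_mono) auto
    then have "M * s ^ n \<le> s ^ n * (s - 1)"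
      by (simp only: mult.commute)
    with key assms(2) have "M = 0" by linarith
    with key pos show False by simp
  qed
qed

lemma less_sqrt_of_power_le_weighted_sum:
  fixes t :: real and A :: "nat \<Rightarrow> real"
  assumes "0 \<le> t" "t ^ n \<le> (\<Sum>k<n. A k * t ^ k)"
  shows "t < sqrt (1 + (\<Sum>k<n. (A k)\<^sup>2))"
proof -
  have "(t\<^sup>2) ^ n = (t ^ n)\<^sup>2"
    by (simp add: power_mult_distrib[symmetric] power_mult[symmetric] mult.commute)
  also have "\<dots> \<le> (\<Sum>k<n. A k * t ^ k)\<^sup>2"
    using assms by (intro power_mono) auto
  also have "\<dots> \<le> (\<Sum>k<n. (A k)\<^sup>2) * (\<Sum>k<n. (t ^ k)\<^sup>2)"
    by (rule Cauchy_Schwarz_ineq_sum)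
  also have "(\<Sum>k<n. (t ^ k)\<^sup>2) = (\<Sum>k<n. (t\<^sup>2) ^ k)"
    by (simp add: power_mult[symmetric] mult.commute)
  finally have "t\<^sup>2 < 1 + (\<Sum>k<n. (A k)\<^sup>2)"
    by (rule less_one_plus_of_power_le_geometric_sum[rotated 2]) (simp_all add: sum_nonneg)
  then show ?thesis
    using assms(1) by (intro real_less_rsqrt)
qed

lemma less_one_plus_Max_of_power_le_weighted_sum:
  fixes t :: real and A :: "nat \<Rightarrow> real"
  assumes "0 \<le> t" "\<And>k. k < n \<Longrightarrow> 0 \<le> A k" and le: "t ^ n \<le> (\<Sum>k<n. A k * t ^ k)"
  shows "t < 1 + Max (A ` {..<n})"
proof -
  have "n \<noteq> 0"
    using le by (rule contrapos_pn) simp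
  then have A_le_Max: "A k \<le> Max (A ` {..<n})" if "k < n" for k
    using that by (intro Max_ge) auto
  have "t ^ n \<le> (\<Sum>k<n. Max (A ` {..<n}) * t ^ k)"
    using le A_le_Max assms(1) by (elim order.trans, intro sum_mono mult_right_mono) auto
  moreover have "0 \<le> Max (A ` {..<n})"
    using order.trans[OF assms(2) A_le_Max, of 0] \<open>n \<noteq> 0\<close> by blast
  ultimately show ?thesis
    using assms(1) by (intro less_one_plus_of_power_le_geometric_sum) (auto simp: sum_distrib_left)
qed

lemma le_max_one_sum_of_power_le_weighted_sum:
  fixes t :: real and A :: "nat \<Rightarrow> real"
  assumes "\<And>k. k < n \<Longrightarrow> 0 \<le> A k" and le: "t ^ n \<le> (\<Sum>k<n. A k * t ^ k)"
  shows "t \<le> max 1 (\<Sum>k<n. A k)"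
proof (cases "t \<le> 1")
  case False
  have "n \<noteq> 0"
    using le by (rule contrapos_pn) simp
  then have "t * t ^ (n - 1) = t ^ n"
    by (simp add: power_eq_if)
  also have "\<dots> \<le> (\<Sum>k<n. A k * t ^ (n - 1))"
    using le False assms(1) by (elim order.trans, intro sum_mono mult_left_mono power_increasing) auto
  also have "\<dots> = (\<Sum>k<n. A k) * t ^ (n - 1)"
    by (simp add: sum_distrib_right)
  finally show ?thesis
    using False by simp
qed simp

lemma norm_power_le_of_monic_root:
  fixes c :: "nat \<Rightarrow> 'a::real_normed_field"
  assumes "(\<Sum>k\<le>n. c k * z ^ k) = 0" "c n = 1"
  shows "norm z ^ n \<le> (\<Sum>k<n. norm (c k) * norm z ^ k)"
proof -
  have "z ^ n = - (\<Sum>k<n. c k * z ^ k)"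
    using assms by (simp add: lessThan_Suc_atMost[symmetric] eq_neg_iff_add_eq_0 add.commute)
  then have "norm z ^ n = norm (\<Sum>k<n. c k * z ^ k)"
    by (metis norm_minus_cancel norm_power)
  also have "\<dots> \<le> (\<Sum>k<n. norm (c k) * norm z ^ k)"
    by (rule order.trans[OF norm_sum]) (simp add: norm_mult norm_power)
  finally show ?thesis .
qed

lemma cd_lo_space [simp]: "cd_lo k x \<in> cd_space k"
  and cd_hi_space [simp]: "cd_hi k x \<in> cd_space k"
  and cd_one_space [simp]: "cd_one \<in> cd_space k"
  by (simp_all add: cd_space_def cd_lo_def cd_hi_def cd_one_def)

lemma cd_uminus_space [simp]: "x \<in> cd_space k \<Longrightarrow> - x \<in> cd_space k"
  by (simp add: cd_space_def)

lemma cd_conj_space [simp]: "cd_conj k x \<in> cd_space k"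
  by (cases k) (auto simp: cd_space_def cd_join_def)

lemma cd_lo_join [simp]: "x \<in> cd_space k \<Longrightarrow> cd_lo k (cd_join k x y) = x"
  and cd_hi_join [simp]: "y \<in> cd_space k \<Longrightarrow> cd_hi k (cd_join k x y) = y"
  and cd_join_lo_hi: "z \<in> cd_space (Suc k) \<Longrightarrow> cd_join k (cd_lo k z) (cd_hi k z) = z"
  by (auto simp: cd_space_def cd_lo_def cd_hi_def cd_join_def fun_eq_iff)

lemma cd_join_apply_0 [simp]: "cd_join k x y 0 = x 0"
  by (simp add: cd_join_def)

lemma linear_cd_lo: "linear (cd_lo k)"
  and linear_cd_hi: "linear (cd_hi k)"
  by (auto intro!: linearI simp: cd_lo_def cd_hi_def fun_eq_iff scaleR_fun_def)

lemma cd_join_add: "cd_join k (x + y) (z + w) = cd_join k x z + cd_join k y w"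
  and cd_join_scaleR: "cd_join k (c *\<^sub>R x) (c *\<^sub>R z) = c *\<^sub>R cd_join k x z"
  by (auto simp: cd_join_def fun_eq_iff scaleR_fun_def)

lemma cd_lo_one [simp]: "cd_lo k cd_one = cd_one"
  and cd_hi_one [simp]: "cd_hi k cd_one = 0"
  and cd_join_one_0: "cd_join k cd_one 0 = cd_one"
  by (auto simp: cd_lo_def cd_hi_def cd_join_def cd_one_def fun_eq_iff)

lemma linear_cd_conj: "linear (cd_conj k)"
proof (induction k)
  case 0
  show ?case by (auto intro!: linearI simp: fun_eq_iff scaleR_fun_def)
next
  case (Suc k)
  show ?case
  proof (rule linearI)
    fix x y :: "nat \<Rightarrow> real" and c :: real
    show "cd_conj (Suc k) (x + y) = cd_conj (Suc k) x + cd_conj (Suc k) y"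
      by (simp add: linear_add[OF Suc.IH] linear_add[OF linear_cd_lo] linear_add[OF linear_cd_hi]
        cd_join_add[symmetric])
    show "cd_conj (Suc k) (c *\<^sub>R x) = c *\<^sub>R cd_conj (Suc k) x"
      by (simp add: linear_scale[OF Suc.IH] linear_scale[OF linear_cd_lo] linear_scale[OF linear_cd_hi]
        cd_join_scaleR[symmetric])
  qed
qed

lemmas cd_conj_zero [simp] = linear_0[OF linear_cd_conj]

lemma bilinear_cd_mult: "bilinear (cd_mult k)"
proof (induction k)
  case 0
  show ?case by (auto simp: bilinear_def fun_eq_iff scaleR_fun_def algebra_simps intro!: linearI)
next
  case (Suc k)
  note simps = Let_def bilinear_ladd[OF Suc.IH] bilinear_radd[OF Suc.IH]
    bilinear_lmul[OF Suc.IH] bilinear_rmul[OF Suc.IH]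
    linear_add[OF linear_cd_lo] linear_add[OF linear_cd_hi] linear_add[OF linear_cd_conj]
    linear_scale[OF linear_cd_lo] linear_scale[OF linear_cd_hi] linear_scale[OF linear_cd_conj]
    cd_join_add[symmetric] cd_join_scaleR[symmetric] scaleR_add_right
  show ?case
    unfolding bilinear_def
    by (intro allI conjI linearI) (simp_all add: simps algebra_simps)
qed

lemmas cd_mult_add_left [simp] = bilinear_ladd[OF bilinear_cd_mult]
  and cd_mult_add_right [simp] = bilinear_radd[OF bilinear_cd_mult]
  and cd_mult_scaleR_left [simp] = bilinear_lmul[OF bilinear_cd_mult]
  and cd_mult_scaleR_right [simp] = bilinear_rmul[OF bilinear_cd_mult]
  and cd_mult_minus_left [simp] = bilinear_lneg[OF bilinear_cd_mult]
  and cd_mult_minus_right [simp] = bilinear_rneg[OF bilinear_cd_mult]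
  and cd_mult_zero_left [simp] = bilinear_lzero[OF bilinear_cd_mult]
  and cd_mult_zero_right [simp] = bilinear_rzero[OF bilinear_cd_mult]

lemma cd_conj_one [simp]: "cd_conj k cd_one = cd_one"
  by (induction k) (simp_all add: cd_join_one_0, auto simp: cd_one_def)

lemma cd_conj_apply_0 [simp]: "cd_conj k x 0 = x 0"
  by (induction k arbitrary: x) (simp_all add: cd_lo_def)

lemma cd_mult_one_right: "x \<in> cd_space k \<Longrightarrow> cd_mult k x cd_one = x"
  by (induction k arbitrary: x) (simp_all add: Let_def cd_join_lo_hi, auto simp: cd_one_def cd_space_def)

lemma cd_mult_one_left: "x \<in> cd_space k \<Longrightarrow> cd_mult k cd_one x = x"
  by (induction k arbitrary: x)
    (simp_all add: Let_def cd_join_lo_hi cd_mult_one_right, auto simp: cd_one_def cd_space_def)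

lemma sum_lessThan_double:
  "(\<Sum>i<2 * N. f i) = (\<Sum>i<N. f i) + (\<Sum>i<N. f (i + N))" for N :: nat
  using sum.atLeastLessThan_concat[of 0 N "2 * N" f] sum.shift_bounds_nat_ivl[of f 0 N N]
  by (simp add: atLeast0LessThan mult_2)

lemma cd_n_apply_0: "cd_n k x 0 = (\<Sum>i<2^k. (x i)\<^sup>2)"
proof (induction k arbitrary: x)
  case 0
  show ?case by (simp add: cd_n_def power2_eq_square)
next
  case (Suc k)
  have "cd_n (Suc k) x 0 = cd_n k (cd_lo k x) 0 + cd_n k (cd_hi k x) 0"
    by (simp add: cd_n_def Let_def)
  also have "\<dots> = (\<Sum>i<2^k. (x i)\<^sup>2) + (\<Sum>i<2^k. (x (i + 2^k))\<^sup>2)"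
    by (simp add: Suc.IH cd_lo_def cd_hi_def)
  finally show ?case by (simp add: sum_lessThan_double)
qed

lemma cd_abs_eq_L2_set: "cd_abs m x = L2_set x {..<2^m}"
  by (simp add: cd_abs_def cd_n_apply_0 L2_set_def)

lemma cd_abs_nonneg [simp]: "0 \<le> cd_abs m x"
  by (simp add: cd_abs_eq_L2_set)

lemma cd_inner_eq_sum: "cd_inner m x y = (\<Sum>i<2^m. x i * y i)"
  by (simp add: cd_inner_def cd_n_apply_0 power2_sum sum.distrib sum_distrib_left[symmetric] mult.assoc)

lemma cd_one_apply_0 [simp]: "cd_one 0 = 1"
  by (simp add: cd_one_def)

lemma sum_cd_one [simp]: "(\<Sum>i<2^m. cd_one i) = 1"
  by (simp add: cd_one_def)

lemma sum_cd_one_mult [simp]: "(\<Sum>i<2^m. cd_one i * f i) = f 0"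
  and sum_mult_cd_one [simp]: "(\<Sum>i<2^m. f i * cd_one i) = f 0"
  by (simp_all add: cd_one_def if_distrib[of "\<lambda>c. c * _"] if_distrib[of "\<lambda>c. _ * c"] cong: if_cong)

lemma cd_abs_convex_comb_le:
  assumes "0 \<le> u" "0 \<le> v"
  shows "cd_abs m (u *\<^sub>R x + v *\<^sub>R y) \<le> u * cd_abs m x + v * cd_abs m y"
proof -
  have "cd_abs m (u *\<^sub>R x + v *\<^sub>R y) = L2_set (\<lambda>i. u * x i + v * y i) {..<2^m}"
    by (simp add: cd_abs_eq_L2_set scaleR_fun_def plus_fun_def)
  also have "\<dots> \<le> L2_set (\<lambda>i. u * x i) {..<2^m} + L2_set (\<lambda>i. v * y i) {..<2^m}"
    by (rule L2_set_triangle_ineq)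
  also have "\<dots> = u * cd_abs m x + v * cd_abs m y"
    using assms by (simp add: cd_abs_eq_L2_set L2_set_right_distrib)
  finally show ?thesis .
qed

lemma convex_cd_abs_less: "convex {x. cd_abs m x < R}"
  by (rule convexI) (auto intro: order.strict_trans1[OF cd_abs_convex_comb_le] convex_bound_lt)

lemma convex_cd_abs_le: "convex {x. cd_abs m x \<le> R}"
  by (rule convexI) (auto intro: order.trans[OF cd_abs_convex_comb_le] convex_bound_le)

definition cd_of_complex :: "(nat \<Rightarrow> real) \<Rightarrow> complex \<Rightarrow> (nat \<Rightarrow> real)" where
  "cd_of_complex I z = Re z *\<^sub>R cd_one + Im z *\<^sub>R I"

locale cd_imag_unit =
  fixes m :: nat and I :: "nat \<Rightarrow> real"
  assumes unit: "cd_unit m I"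
begin

definition proj_coeff :: "(nat \<Rightarrow> real) \<Rightarrow> complex" where
  "proj_coeff x = Complex (cd_inner m x cd_one) (cd_inner m x I)"

lemma I_space: "I \<in> cd_space m"
  using unit by (simp add: cd_unit_def)

lemma cd_conj_I: "cd_conj m I = - I"
  using unit by (auto simp: cd_unit_def cd_tr_def add_eq_0_iff)

lemma cd_mult_I_I: "cd_mult m I I = - cd_one"
  using unit by (simp add: cd_unit_def cd_n_def cd_conj_I minus_equation_iff)

lemma I_apply_0 [simp]: "I 0 = 0"
  using cd_conj_apply_0[of m I] by (simp add: cd_conj_I)

lemma sum_I_squares: "(\<Sum>i<2^m. (I i)\<^sup>2) = 1"
  using unit by (simp add: cd_unit_def cd_one_def flip: cd_n_apply_0)

lemma cd_CI_eq_range: "cd_CI I = range (cd_of_complex I)"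
proof -
  have "u *\<^sub>R cd_one + v *\<^sub>R I = cd_of_complex I (Complex u v)" for u v
    by (simp add: cd_of_complex_def)
  then show ?thesis
    by (auto simp: cd_CI_def) (auto simp: cd_of_complex_def)
qed

lemma cd_of_complex_mult: "cd_mult m (cd_of_complex I z) (cd_of_complex I w) = cd_of_complex I (z * w)"
  by (simp add: cd_of_complex_def cd_mult_one_left cd_mult_one_right I_space cd_mult_I_I algebra_simps)

lemma cd_pow_of_complex: "cd_pow m (cd_of_complex I z) k = cd_of_complex I (z ^ k)"
  by (induction k) (simp_all add: cd_pow_def cd_of_complex_mult mult.commute, simp add: cd_of_complex_def)

lemma cd_of_complex_sum: "cd_of_complex I (sum f S) = (\<Sum>s\<in>S. cd_of_complex I (f s))"
  by (simp add: cd_of_complex_def Re_sum Im_sum scaleR_sum_left sum.distrib)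

lemma cd_of_complex_eq_0_iff: "cd_of_complex I z = 0 \<longleftrightarrow> z = 0"
proof
  assume z: "cd_of_complex I z = 0"
  have "Re z = 0"
    using fun_cong[OF z, of 0] by (simp add: cd_of_complex_def scaleR_fun_def cd_one_def)
  moreover have "I \<noteq> 0"
    using sum_I_squares by auto
  ultimately show "z = 0"
    using z by (simp add: cd_of_complex_def complex_eq_iff)
qed (simp add: cd_of_complex_def)

lemma cd_abs_of_complex: "cd_abs m (cd_of_complex I z) = cmod z"
proof -
  have "(cd_of_complex I z i)\<^sup>2 = (Re z)\<^sup>2 * cd_one i + (Im z)\<^sup>2 * (I i)\<^sup>2" for i
    by (cases "i = 0") (simp_all add: cd_of_complex_def scaleR_fun_def cd_one_def power_mult_distrib)
  then have "(\<Sum>i<2^m. (cd_of_complex I z i)\<^sup>2) = (Re z)\<^sup>2 + (Im z)\<^sup>2"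
    by (simp add: sum.distrib sum_I_squares flip: sum_distrib_left)
  then show ?thesis
    by (simp add: cd_abs_def cd_n_apply_0 cmod_def)
qed

lemma cd_proj_eq: "cd_proj m I x = cd_of_complex I (proj_coeff x)"
  by (simp add: cd_proj_def cd_of_complex_def proj_coeff_def)

lemma proj_coeff_one: "proj_coeff cd_one = 1"
  by (simp add: proj_coeff_def cd_inner_eq_sum complex_eq_iff)

lemma norm_proj_coeff_le: "cmod (proj_coeff x) \<le> cd_abs m x"
proof -
  define \<alpha> where "\<alpha> = x 0"
  define \<beta> where "\<beta> = (\<Sum>i<2^m. x i * I i)"
  have residual: "(x i - \<alpha> * cd_one i - \<beta> * I i)\<^sup>2
      = (x i)\<^sup>2 - 2 * \<alpha> * (x i * cd_one i) + \<alpha>\<^sup>2 * cd_one i - 2 * \<beta> * (x i * I i) + \<beta>\<^sup>2 * (I i)\<^sup>2"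
    for i by (cases "i = 0") (simp_all add: cd_one_def power2_eq_square algebra_simps)
  have "0 \<le> (\<Sum>i<2^m. (x i - \<alpha> * cd_one i - \<beta> * I i)\<^sup>2)"
    by (simp add: sum_nonneg)
  also have "\<dots> = (\<Sum>i<2^m. (x i)\<^sup>2) - 2 * \<alpha> * (\<Sum>i<2^m. x i * cd_one i)
      + \<alpha>\<^sup>2 * (\<Sum>i<2^m. cd_one i) - 2 * \<beta> * (\<Sum>i<2^m. x i * I i) + \<beta>\<^sup>2 * (\<Sum>i<2^m. (I i)\<^sup>2)"
    by (simp only: residual sum.distrib sum_subtractf flip: sum_distrib_left)
  also have "\<dots> = (\<Sum>i<2^m. (x i)\<^sup>2) - \<alpha>\<^sup>2 - \<beta>\<^sup>2"
    using sum_I_squares by (simp add: power2_eq_square flip: \<alpha>_def \<beta>_def)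
  finally have "\<alpha>\<^sup>2 + \<beta>\<^sup>2 \<le> (\<Sum>i<2^m. (x i)\<^sup>2)"
    by simp
  then show ?thesis
    by (simp add: proj_coeff_def cd_inner_eq_sum \<alpha>_def \<beta>_def complex_norm cd_abs_def cd_n_apply_0)
qed

lemma cd_fI_of_complex:
  "cd_fI m a n I (cd_of_complex I z) = cd_of_complex I (\<Sum>k\<le>n. proj_coeff (a k) * z ^ k)"
  by (simp add: cd_fI_def cd_proj_eq cd_pow_of_complex cd_of_complex_mult cd_of_complex_sum)

lemma cd_abs_power_le_of_root:
  assumes "a n = cd_one" "s \<in> cd_CI I" "cd_fI m a n I s = 0"
  shows "cd_abs m s ^ n \<le> (\<Sum>k<n. cd_abs m (a k) * cd_abs m s ^ k)"
proof -
  obtain z where s: "s = cd_of_complex I z"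
    using assms(2) by (auto simp: cd_CI_eq_range)
  have "(\<Sum>k\<le>n. proj_coeff (a k) * z ^ k) = 0"
    using assms(3) by (simp add: s cd_fI_of_complex cd_of_complex_eq_0_iff)
  then have "cmod z ^ n \<le> (\<Sum>k<n. cmod (proj_coeff (a k)) * cmod z ^ k)"
    by (rule norm_power_le_of_monic_root) (simp add: assms(1) proj_coeff_one)
  also have "\<dots> \<le> (\<Sum>k<n. cd_abs m (a k) * cmod z ^ k)"
    by (intro sum_mono mult_right_mono norm_proj_coeff_le) simp
  finally show ?thesis
    by (simp add: s cd_abs_of_complex)
qed

end

theorem lemma4p9:
  fixes m n :: nat and a :: "nat \<Rightarrow> nat \<Rightarrow> real"
  assumes "n \<ge> 1"
    and "\<And>k. k < n \<Longrightarrow> a k \<in> cd_space m"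
    and "a n = cd_one"
    and "r \<in> cd_snail m a n"
  shows "cd_abs m r < sqrt (1 + (\<Sum>k<n. (cd_abs m (a k))\<^sup>2)) \<and>
         cd_abs m r < 1 + Max ((\<lambda>k. cd_abs m (a k)) ` {..<n}) \<and>
         cd_abs m r \<le> max 1 (\<Sum>k<n. cd_abs m (a k))"
proof -
  obtain I where "cd_unit m I" and r: "r \<in> cd_K m a n I"
    using assms(4) by (auto simp: cd_snail_def)
  interpret cd_imag_unit m I by standard fact
  let ?roots = "{s \<in> cd_CI I. cd_fI m a n I s = 0}"
  let ?R\<^sub>1 = "sqrt (1 + (\<Sum>k<n. (cd_abs m (a k))\<^sup>2))"
  let ?R\<^sub>2 = "1 + Max ((\<lambda>k. cd_abs m (a k)) ` {..<n})"
  let ?R\<^sub>3 = "max 1 (\<Sum>k<n. cd_abs m (a k))"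
  let ?B = "{x. cd_abs m x < ?R\<^sub>1} \<inter> {x. cd_abs m x < ?R\<^sub>2} \<inter> {x. cd_abs m x \<le> ?R\<^sub>3}"
  have "cd_proj m I (a n) \<noteq> 0"
    by (simp add: assms(3) cd_proj_eq proj_coeff_one cd_of_complex_eq_0_iff)
  then have "\<exists>k\<in>{1..n}. cd_proj m I (a k) \<noteq> 0"
    using assms(1) by auto
  then have "r \<in> convex hull ?roots"
    using r by (simp add: cd_K_def)
  moreover have "?roots \<subseteq> ?B"
    using assms(3) cd_abs_power_le_of_root
    by (auto intro: less_sqrt_of_power_le_weighted_sum less_one_plus_Max_of_power_le_weighted_sum
        le_max_one_sum_of_power_le_weighted_sum)
  then have "convex hull ?roots \<subseteq> ?B"
    by (intro hull_minimal convex_Int convex_cd_abs_less convex_cd_abs_le)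
  ultimately show ?thesis
    by blast
qed

end
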